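(* Let $\{\mathcal G,(\Gamma_0,\Gamma_1),(\widetilde\Gamma_0,\widetilde\Gamma_1)\}$ be a triple for the adjoint pair $\{S,\widetilde S\}$ satisfying (G), (D) and (M). Then $\operatorname{dom}S=\ker\widetilde\Gamma_0\cap\ker\widetilde\Gamma_1$ and $\operatorname{dom}\widetilde S=\ker\Gamma_0\cap\ker\Gamma_1$.
   Context: Let $\mathfrak H$ be a separable Hilbert space. An adjoint pair $\{S,\widetilde S\}$ consists of densely defined closed operators $S,\widetilde S$ in $\mathfrak H$ with $(Sf,g)=(f,\widetilde Sg)$ for all $f\in\operatorname{dom}S$, $g\in\operatorname{dom}\widetilde S$. Fix operators $T\subset S^*$ and $\widetilde T\subset\widetilde S^*$ which are cores, i.e. $\overline T=S^*$ and $\overline{\widetilde T}=\widetilde S^*$ (equivalently $T^*=S$, $\widetilde T^*=\widetilde S$). A triple $\{\mathcal G,(\Gamma_0,\Gamma_1),(\widetilde\Gamma_0,\widetilde\Gamma_1)\}$ for $\{S,\widetilde S\}$ consists of a Hilbert space $\mathcal G$ and linear maps $\Gamma_0,\Gamma_1:\operatorname{dom}T\to\mathcal G$, $\widetilde\Gamma_0,\widetilde\Gamma_1:\operatorname{dom}\widetilde T\to\mathcal G$. Put $A_0:=T\upharpoonright\ker\Gamma_0$ and $\widetilde A_0:=\widetilde T\upharpoonright\ker\widetilde\Gamma_0$. Conditions: (G) $(Tf,g)_{\mathfrak H}-(f,\widetilde Tg)_{\mathfrak H}=(\Gamma_1f,\widetilde\Gamma_0g)_{\mathcal G}-(\Gamma_0f,\widetilde\Gamma_1g)_{\mathcal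 G}$ for all $f\in\operatorname{dom}T$, $g\in\operatorname{dom}\widetilde T$; (D) $\operatorname{ran}\Gamma_0$ and $\operatorname{ran}\widetilde\Gamma_0$ are dense in $\mathcal G$; (M) $A_0^*=\widetilde A_0$ and $\widetilde A_0^*=A_0$. *)

theory Defs
  imports "HOL-Analysis.Analysis"
begin

class complex_hilbert = ab_group_add + complete_space +
  fixes scaleC :: "complex \<Rightarrow> 'a \<Rightarrow> 'a" (infixr \<open>*\<^sub>C\<close> 75)
    and cinner :: "'a \<Rightarrow> 'a \<Rightarrow> complex"
  assumes scaleC_add_right: "a *\<^sub>C (x + y) = a *\<^sub>C x + a *\<^sub>C y"
    and scaleC_add_left: "(a + b) *\<^sub>C x = a *\<^sub>C x + b *\<^sub>C x"
    and scaleC_scaleC: "a *\<^sub>C (b *\<^sub>C x) = (a * b) *\<^sub>C x"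
    and scaleC_one: "1 *\<^sub>C x = x"
    and cinner_conj: "cinner x y = cnj (cinner y x)"
    and cinner_add_left: "cinner (x + y) z = cinner x z + cinner y z"
    and cinner_scaleC_left: "cinner (a *\<^sub>C x) y = a * cinner x y"
    and cinner_pos: "x \<noteq> 0 \<Longrightarrow> Re (cinner x x) > 0"
    and dist_cinner: "dist x y = sqrt (Re (cinner (x - y) (x - y)))"

text \<open>A (linear, possibly unbounded) operator in H is identified with its graph, a subset
  of H \<times> H that is a linear subspace and single-valued.  Its domain is
  the library's Domain of the relation.\<close>

definition is_operator :: "('h::complex_hilbert \<times> 'h) set \<Rightarrow> bool" where
  "is_operator A \<longleftrightarrow>
     (0, 0) \<in> A \<and>
     (\<forall>f g h k. (f, g) \<in> A \<longrightarrow> (h, k) \<in> A \<longrightarrow> (f + h, g + k) \<in> A) \<and>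
     (\<forall>a f g. (f, g) \<in> A \<longrightarrow> (a *\<^sub>C f, a *\<^sub>C g) \<in> A) \<and>
     (\<forall>f g k. (f, g) \<in> A \<longrightarrow> (f, k) \<in> A \<longrightarrow> g = k)"

definition densely_defined :: "('h::complex_hilbert \<times> 'h) set \<Rightarrow> bool" where
  "densely_defined A \<longleftrightarrow> closure (Domain A) = UNIV"

definition closed_operator :: "('h::complex_hilbert \<times> 'h) set \<Rightarrow> bool" where
  "closed_operator A \<longleftrightarrow> is_operator A \<and> closed A"

definition op_adjoint :: "('h::complex_hilbert \<times> 'h) set \<Rightarrow> ('h \<times> 'h) set" where
  "op_adjoint A = {(g, h). \<forall>(f, k) \<in> A. cinner k g = cinner f h}"

definition adjoint_pair :: "('h::complex_hilbert \<times> 'h) set \<Rightarrow> ('h \<times> 'h) set \<Rightarrow> bool" where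
  "adjoint_pair S S' \<longleftrightarrow>
     densely_defined S \<and> closed_operator S \<and> densely_defined S' \<and> closed_operator S' \<and>
     (\<forall>f Sf g S'g. (f, Sf) \<in> S \<longrightarrow> (g, S'g) \<in> S' \<longrightarrow> cinner Sf g = cinner f S'g)"

definition linear_on_dom ::
  "('h::complex_hilbert \<times> 'h) set \<Rightarrow> ('h \<Rightarrow> 'g::complex_hilbert) \<Rightarrow> bool" where
  "linear_on_dom T \<Gamma> \<longleftrightarrow>
     (\<forall>f \<in> Domain T. \<forall>g \<in> Domain T. \<Gamma> (f + g) = \<Gamma> f + \<Gamma> g) \<and>
     (\<forall>a. \<forall>f \<in> Domain T. \<Gamma> (a *\<^sub>C f) = a *\<^sub>C \<Gamma> f)"

definition restrict_ker ::
  "('h::complex_hilbert \<times> 'h) set \<Rightarrow> ('h \<Rightarrow> 'g::complex_hilbert) \<Rightarrow> ('h \<times> 'h) set" where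
  "restrict_ker T \<Gamma> = {(f, g) \<in> T. \<Gamma> f = 0}"

end

theory Submission
  imports Defs
begin

(*
  If g is in dom S, then (g, S g) lies in S, which is contained in S** and hence in A0*,
  since A0 is contained in T and T in S*.  By (M), A0* = ~A0, so ~Gamma0 g = 0; then (G)
  together with S contained in T* shows that ~Gamma1 g is orthogonal to the dense set
  ran Gamma0, hence zero.  Conversely, if both boundary values of g vanish, (G) says that
  (g, ~T g) lies in T* = (closure T)* = S**, and S** = S because S is closed.  This last
  fact is the only place where completeness enters, through the projection theorem in the
  Hilbert space H x H.  The statement for ~S is symmetric.
*)

section \<open>Inner product algebra\<close>

lemma cinner_zero_left [simp]: "cinner 0 y = 0"
  using cinner_add_left[of 0 0 y] by simp

lemma cinner_zero_right [simp]: "cinner x 0 = 0"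
  using cinner_conj[of x 0] by simp

lemma cinner_add_right: "cinner z (x + y) = cinner z x + cinner z y"
  by (metis cinner_conj cinner_add_left complex_cnj_add)

lemma cinner_minus_left: "cinner (- x) y = - cinner x y"
  using cinner_add_left[of x "- x" y] by (simp add: eq_neg_iff_add_eq_0 add.commute)

lemma cinner_minus_right: "cinner x (- y) = - cinner x y"
  by (metis cinner_conj cinner_minus_left complex_cnj_minus)

lemma cinner_diff_left: "cinner (x - y) z = cinner x z - cinner y z"
  using cinner_add_left[of x "- y" z] by (simp add: cinner_minus_left)

lemma cinner_diff_right: "cinner z (x - y) = cinner z x - cinner z y"
  using cinner_add_right[of z x "- y"] by (simp add: cinner_minus_right)

lemma cinner_scaleC_right: "cinner x (a *\<^sub>C y) = cnj a * cinner x y"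
  by (metis cinner_conj cinner_scaleC_left complex_cnj_mult)

lemma scaleC_zero_right [simp]: "a *\<^sub>C 0 = 0"
  using scaleC_add_right[of a 0 0] by simp

lemma scaleC_minus_right: "a *\<^sub>C (- x) = - (a *\<^sub>C x)"
  using scaleC_add_right[of a x "- x"] by (simp add: eq_neg_iff_add_eq_0 add.commute)

lemma scaleC_diff_right: "a *\<^sub>C (x - y) = a *\<^sub>C x - a *\<^sub>C y"
  using scaleC_add_right[of a x "- y"] by (simp add: scaleC_minus_right)

definition sqnorm :: "'a::complex_hilbert \<Rightarrow> real" where
  "sqnorm x = Re (cinner x x)"

lemma sqnorm_nonneg: "0 \<le> sqnorm x"
  using cinner_pos[of x] by (cases "x = 0") (auto simp: sqnorm_def)

lemma sqnorm_eq_0_iff: "sqnorm x = 0 \<longleftrightarrow> x = 0"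
  using cinner_pos[of x] by (cases "x = 0") (auto simp: sqnorm_def)

lemma dist_eq_sqrt_sqnorm: "dist x y = sqrt (sqnorm (x - y))"
  by (simp add: sqnorm_def dist_cinner)

lemma sqnorm_diff_commute: "sqnorm (x - y) = sqnorm (y - x)"
  by (metis minus_diff_eq cinner_minus_left cinner_minus_right minus_minus sqnorm_def)

lemma sqnorm_scaleC: "sqnorm (c *\<^sub>C x) = (cmod c)\<^sup>2 * sqnorm x"
proof -
  have "cinner (c *\<^sub>C x) (c *\<^sub>C x) = (c * cnj c) * cinner x x"
    by (simp add: cinner_scaleC_left cinner_scaleC_right)
  then show ?thesis
    by (simp add: sqnorm_def complex_norm_square[symmetric])
qed

lemma sqnorm_diff_scaleC:
  "sqnorm (z - t *\<^sub>C m) = sqnorm z - 2 * Re (cnj t * cinner z m) + (cmod t)\<^sup>2 * sqnorm m"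
proof -
  have "cinner (z - t *\<^sub>C m) (z - t *\<^sub>C m) =
      cinner z z - cnj t * cinner z m - t * cnj (cinner z m) + (t * cnj t) * cinner m m"
    by (simp add: cinner_diff_left cinner_diff_right cinner_scaleC_left cinner_scaleC_right
        cinner_conj[of m z] algebra_simps)
  then show ?thesis
    by (simp add: sqnorm_def complex_norm_square[symmetric])
qed

lemma parallelogram_law: "sqnorm (x + y) + sqnorm (x - y) = 2 * sqnorm x + 2 * sqnorm y"
  by (simp add: sqnorm_def cinner_add_left cinner_add_right cinner_diff_left cinner_diff_right)

lemma sqnorm_diff_projection:
  assumes "y \<noteq> 0"
  shows "sqnorm (x - (cinner x y / sqnorm y) *\<^sub>C y) = sqnorm x - (cmod (cinner x y))\<^sup>2 / sqnorm y"
proof -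
  define c r where "c = cinner x y" and "r = sqnorm y"
  have r: "r > 0"
    using sqnorm_nonneg[of y] sqnorm_eq_0_iff[of y] assms by (simp add: r_def)
  have "sqnorm (x - (c / r) *\<^sub>C y) = sqnorm x - 2 * Re (cnj c * c) / r + (cmod c)\<^sup>2 / r"
    using r by (simp add: sqnorm_diff_scaleC norm_divide power_divide c_def r_def power2_eq_square)
  also have "Re (cnj c * c) = (cmod c)\<^sup>2"
    by (metis Re_complex_of_real complex_norm_square mult.commute)
  finally show ?thesis
    by (simp add: c_def r_def)
qed

lemma cauchy_schwarz: "cmod (cinner x y) \<le> sqrt (sqnorm x) * sqrt (sqnorm y)"
proof (cases "y = 0")
  case False
  have r: "sqnorm y > 0"
    using sqnorm_nonneg[of y] sqnorm_eq_0_iff[of y] False by simp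
  have "0 \<le> sqnorm x - (cmod (cinner x y))\<^sup>2 / sqnorm y"
    using sqnorm_nonneg sqnorm_diff_projection[OF False, of x] by metis
  then have "(cmod (cinner x y))\<^sup>2 \<le> sqnorm x * sqnorm y"
    using r by (simp add: field_simps)
  then show ?thesis
    by (metis real_sqrt_abs real_sqrt_le_mono real_sqrt_mult abs_norm_cancel)
qed (simp add: sqnorm_def)

lemma continuous_on_cinner_left: "continuous_on S (\<lambda>x. cinner x g)"
proof (rule lipschitz_on_continuous_on)
  show "lipschitz_on (sqrt (sqnorm g)) S (\<lambda>x. cinner x g)"
  proof (rule lipschitz_onI)
    fix x y
    have "dist (cinner x g) (cinner y g) = cmod (cinner (x - y) g)"
      by (simp add: dist_norm cinner_diff_left)
    also have "\<dots> \<le> dist x y * sqrt (sqnorm g)"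
      using cauchy_schwarz[of "x - y" g] by (simp add: dist_eq_sqrt_sqnorm)
    finally show "dist (cinner x g) (cinner y g) \<le> sqrt (sqnorm g) * dist x y"
      by (simp add: mult.commute)
  qed (simp add: sqnorm_nonneg)
qed

lemma continuous_on_cinner_left_comp [continuous_intros]:
  "continuous_on S f \<Longrightarrow> continuous_on S (\<lambda>x. cinner (f x) g)"
  using continuous_on_compose2[OF continuous_on_cinner_left[of UNIV g]] by auto

lemma orthogonal_to_dense_eq_0:
  assumes "closure X = UNIV" and "\<forall>x\<in>X. cinner x y = 0"
  shows "y = 0"
proof -
  have "closed {x. cinner x y = 0}"
    by (intro closed_Collect_eq continuous_intros)
  moreover have "X \<subseteq> {x. cinner x y = 0}"
    using assms(2) by auto
  ultimately have "closure X \<subseteq> {x. cinner x y = 0}"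
    by (simp add: closure_minimal)
  then have "cinner y y = 0"
    using assms(1) by auto
  then show "y = 0"
    using sqnorm_eq_0_iff[of y] by (simp add: sqnorm_def)
qed

section \<open>The projection theorem\<close>

definition csubspace :: "'a::complex_hilbert set \<Rightarrow> bool" where
  "csubspace M \<longleftrightarrow> 0 \<in> M \<and> (\<forall>x\<in>M. \<forall>y\<in>M. x + y \<in> M) \<and> (\<forall>a. \<forall>x\<in>M. a *\<^sub>C x \<in> M)"

lemma sqnorm_diff_le_near_infimum:
  assumes M: "csubspace M" "x \<in> M" "y \<in> M" and d: "\<forall>m\<in>M. d \<le> sqnorm (w - m)"
  shows "sqnorm (x - y) \<le> 2 * (sqnorm (w - x) - d) + 2 * (sqnorm (w - y) - d)"
proof -
  define mid where "mid = (1/2::complex) *\<^sub>C (x + y)"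
  have "mid \<in> M"
    using M by (simp add: csubspace_def mid_def)
  then have "d \<le> sqnorm (w - mid)"
    using d by blast
  have "(w - x) + (w - y) = (2::complex) *\<^sub>C (w - mid)"
    using scaleC_add_left[of 1 1 w]
    by (simp add: mid_def scaleC_diff_right scaleC_scaleC scaleC_one algebra_simps)
  then have "sqnorm ((w - x) + (w - y)) = 4 * sqnorm (w - mid)"
    by (simp add: sqnorm_scaleC)
  moreover have "sqnorm ((w - x) - (w - y)) = sqnorm (x - y)"
    by (simp add: sqnorm_diff_commute)
  ultimately show ?thesis
    using parallelogram_law[of "w - x" "w - y"] \<open>d \<le> sqnorm (w - mid)\<close> by (simp add: algebra_simps)
qed

lemma minimizing_sequence_Cauchy:
  assumes M: "csubspace M" and ms: "\<And>n. ms n \<in> M"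
    and d: "\<forall>m\<in>M. d \<le> sqnorm (w - m)"
    and near: "\<And>n. sqnorm (w - ms n) < d + 1 / real (Suc n)"
  shows "Cauchy ms"
proof (rule metric_CauchyI)
  fix e :: real assume "e > 0"
  obtain N :: nat where N: "4 / e\<^sup>2 < real N"
    using reals_Archimedean2 by blast
  have "dist (ms i) (ms j) < e" if "N \<le> i" "N \<le> j" for i j
  proof -
    have "4 / e\<^sup>2 < real (Suc i)" "4 / e\<^sup>2 < real (Suc j)"
      using N that by auto
    then have "2 / real (Suc i) < e\<^sup>2 / 2" "2 / real (Suc j) < e\<^sup>2 / 2"
      using \<open>e > 0\<close> by (simp_all add: field_simps)
    moreover have "sqnorm (ms i - ms j) \<le> 2 / real (Suc i) + 2 / real (Suc j)"
      using sqnorm_diff_le_near_infimum[OF M ms ms d, of i j] near[of i] near[of j]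
      by argo
    ultimately have "sqnorm (ms i - ms j) < e\<^sup>2"
      by linarith
    then show ?thesis
      using \<open>e > 0\<close> real_sqrt_less_mono[of "sqnorm (ms i - ms j)" "e\<^sup>2"]
      by (simp add: dist_eq_sqrt_sqnorm)
  qed
  then show "\<exists>N. \<forall>i\<ge>N. \<forall>j\<ge>N. dist (ms i) (ms j) < e"
    by blast
qed

lemma closed_csubspace_nearest_point:
  assumes M: "csubspace M" "closed M"
  obtains p where "p \<in> M" "\<forall>m\<in>M. sqnorm (w - p) \<le> sqnorm (w - m)"
proof -
  define d where "d = Inf ((\<lambda>m. sqnorm (w - m)) ` M)"
  have "0 \<in> M"
    using M(1) by (simp add: csubspace_def)
  have bdd: "bdd_below ((\<lambda>m. sqnorm (w - m)) ` M)"
    unfolding bdd_below_def using sqnorm_nonneg by blast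
  have d_le: "\<forall>m\<in>M. d \<le> sqnorm (w - m)"
    unfolding d_def using bdd by (auto intro: cInf_lower)
  have "\<exists>m\<in>M. sqnorm (w - m) < d + 1 / real (Suc n)" for n
  proof -
    have "Inf ((\<lambda>m. sqnorm (w - m)) ` M) < d + 1 / real (Suc n)"
      by (simp add: d_def)
    then show ?thesis
      using bdd \<open>0 \<in> M\<close> by (subst (asm) cInf_less_iff) auto
  qed
  then obtain ms where ms: "\<And>n. ms n \<in> M" "\<And>n. sqnorm (w - ms n) < d + 1 / real (Suc n)"
    by metis
  then have "Cauchy ms"
    using minimizing_sequence_Cauchy[OF M(1) _ d_le] by blast
  then obtain p where p: "ms \<longlonglongrightarrow> p"
    using Cauchy_convergent convergent_def by blast
  have "p \<in> M"
    using closed_sequentially[OF M(2) ms(1) p] .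
  have "(\<lambda>n. (dist w (ms n))\<^sup>2) \<longlonglongrightarrow> (dist w p)\<^sup>2"
    using p by (intro tendsto_intros)
  moreover have "(\<lambda>n. d + 1 / real (Suc n)) \<longlonglongrightarrow> d"
    using tendsto_add[OF tendsto_const LIMSEQ_inverse_real_of_nat, of d] by (simp add: inverse_eq_divide)
  moreover have "(dist w (ms n))\<^sup>2 \<le> d + 1 / real (Suc n)" for n
    using ms(2)[of n] sqnorm_nonneg[of "w - ms n"] by (simp add: dist_eq_sqrt_sqnorm)
  ultimately have "(dist w p)\<^sup>2 \<le> d"
    by (intro LIMSEQ_le) auto
  then have "sqnorm (w - p) \<le> d"
    using sqnorm_nonneg[of "w - p"] by (simp add: dist_eq_sqrt_sqnorm)
  then show thesis
    using that \<open>p \<in> M\<close> d_le by fastforce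
qed

lemma nearest_point_orthogonal:
  assumes M: "csubspace M" "p \<in> M" "m \<in> M"
    and nearest: "\<forall>m\<in>M. sqnorm (w - p) \<le> sqnorm (w - m)"
  shows "cinner (w - p) m = 0"
proof (cases "m = 0")
  case False
  define t where "t = cinner (w - p) m / sqnorm m"
  have "p + t *\<^sub>C m \<in> M"
    using M by (simp add: csubspace_def)
  then have "sqnorm (w - p) \<le> sqnorm ((w - p) - t *\<^sub>C m)"
    using nearest by (metis diff_diff_eq)
  also have "\<dots> = sqnorm (w - p) - (cmod (cinner (w - p) m))\<^sup>2 / sqnorm m"
    unfolding t_def by (rule sqnorm_diff_projection[OF False])
  finally have "(cmod (cinner (w - p) m))\<^sup>2 / sqnorm m \<le> 0"
    by simp
  moreover have "sqnorm m > 0"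
    using sqnorm_nonneg[of m] sqnorm_eq_0_iff[of m] False by simp
  ultimately show ?thesis
    by (simp add: divide_le_0_iff)
qed simp

lemma orthogonal_projection_exists:
  assumes "csubspace M" "closed M"
  obtains p where "p \<in> M" "\<forall>m\<in>M. cinner (w - p) m = 0"
  using closed_csubspace_nearest_point[OF assms] nearest_point_orthogonal[OF assms(1)] by metis

section \<open>Adjoints of graphs\<close>

instantiation prod :: (complex_hilbert, complex_hilbert) complex_hilbert
begin

definition scaleC_prod :: "complex \<Rightarrow> 'a \<times> 'b \<Rightarrow> 'a \<times> 'b" where
  "scaleC_prod a x = (a *\<^sub>C fst x, a *\<^sub>C snd x)"

definition cinner_prod :: "'a \<times> 'b \<Rightarrow> 'a \<times> 'b \<Rightarrow> complex" where
  "cinner_prod x y = cinner (fst x) (fst y) + cinner (snd x) (snd y)"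

instance
proof
  fix a b :: complex and x y z :: "'a \<times> 'b"
  show "a *\<^sub>C (x + y) = a *\<^sub>C x + a *\<^sub>C y"
    by (simp add: scaleC_prod_def scaleC_add_right)
  show "(a + b) *\<^sub>C x = a *\<^sub>C x + b *\<^sub>C x"
    by (simp add: scaleC_prod_def scaleC_add_left)
  show "a *\<^sub>C (b *\<^sub>C x) = (a * b) *\<^sub>C x"
    by (simp add: scaleC_prod_def scaleC_scaleC)
  show "1 *\<^sub>C x = x"
    by (simp add: scaleC_prod_def scaleC_one)
  show "cinner x y = cnj (cinner y x)"
    by (simp add: cinner_prod_def cinner_conj[of "fst x"] cinner_conj[of "snd x"])
  show "cinner (x + y) z = cinner x z + cinner y z"
    by (simp add: cinner_prod_def cinner_add_left)
  show "cinner (a *\<^sub>C x) y = a * cinner x y"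
    by (simp add: cinner_prod_def scaleC_prod_def cinner_scaleC_left algebra_simps)
  show "Re (cinner x x) > 0" if "x \<noteq> 0"
  proof -
    have "fst x \<noteq> 0 \<or> snd x \<noteq> 0"
      using that by (simp add: prod_eq_iff)
    then show ?thesis
      using cinner_pos[of "fst x"] cinner_pos[of "snd x"]
        sqnorm_nonneg[of "fst x"] sqnorm_nonneg[of "snd x"]
      by (auto simp: cinner_prod_def sqnorm_def add_pos_nonneg add_nonneg_pos)
  qed
  show "dist x y = sqrt (Re (cinner (x - y) (x - y)))"
    using sqnorm_nonneg[of "fst x - fst y"] sqnorm_nonneg[of "snd x - snd y"]
    by (simp add: dist_prod_def cinner_prod_def dist_eq_sqrt_sqnorm sqnorm_def)
qed

end

lemma is_operator_csubspace: "is_operator A \<Longrightarrow> csubspace A"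
  unfolding is_operator_def csubspace_def
  by (auto simp: zero_prod_def scaleC_prod_def)

lemma op_adjoint_antimono: "A \<subseteq> B \<Longrightarrow> op_adjoint B \<subseteq> op_adjoint A"
  unfolding op_adjoint_def by auto

lemma subset_op_adjoint_op_adjoint: "A \<subseteq> op_adjoint (op_adjoint A)"
proof (clarify)
  fix g h assume "(g, h) \<in> A"
  then have "cinner k g = cinner f h" if "(f, k) \<in> op_adjoint A" for f k
  proof -
    have "cinner h f = cinner g k"
      using that \<open>(g, h) \<in> A\<close> unfolding op_adjoint_def by auto
    then show ?thesis
      by (metis cinner_conj)
  qed
  then show "(g, h) \<in> op_adjoint (op_adjoint A)"
    unfolding op_adjoint_def by auto
qed

lemma op_adjoint_closure: "op_adjoint (closure A) = op_adjoint A"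
proof
  show "op_adjoint (closure A) \<subseteq> op_adjoint A"
    by (rule op_adjoint_antimono) (rule closure_subset)
  show "op_adjoint A \<subseteq> op_adjoint (closure A)"
  proof
    fix q assume q: "q \<in> op_adjoint A"
    obtain g h where gh: "q = (g, h)" by (cases q)
    define C where "C = {x. cinner (snd x) g - cinner (fst x) h = 0}"
    have "closed C"
      unfolding C_def by (intro closed_Collect_eq continuous_intros)
    moreover have "A \<subseteq> C"
      using q gh unfolding C_def op_adjoint_def by auto
    ultimately have "closure A \<subseteq> C"
      by (simp add: closure_minimal)
    then show "q \<in> op_adjoint (closure A)"
      using gh unfolding C_def op_adjoint_def by auto
  qed
qed

lemma orthogonal_to_graph_op_adjoint:
  assumes "\<And>x y. (x, y) \<in> A \<Longrightarrow> cinner u x + cinner v y = 0"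
  shows "(v, - u) \<in> op_adjoint A"
  unfolding op_adjoint_def
proof (clarify)
  fix x y assume "(x, y) \<in> A"
  then have "cinner v y = - cinner u x"
    using assms by (simp add: eq_neg_iff_add_eq_0 add.commute)
  then show "cinner y v = cinner x (- u)"
    by (metis cinner_conj cinner_minus_right complex_cnj_minus)
qed

lemma op_adjoint_op_adjoint_closed:
  assumes "is_operator S" and "closed S"
  shows "op_adjoint (op_adjoint S) = S"
proof
  show "S \<subseteq> op_adjoint (op_adjoint S)"
    by (rule subset_op_adjoint_op_adjoint)
  show "op_adjoint (op_adjoint S) \<subseteq> S"
  proof (clarify)
    fix g h assume gh: "(g, h) \<in> op_adjoint (op_adjoint S)"
    obtain p where "p \<in> S" and orth: "\<forall>m\<in>S. cinner ((g, h) - p) m = 0"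
      using orthogonal_projection_exists[OF is_operator_csubspace[OF assms(1)] assms(2)] by blast
    obtain a b where ab: "p = (a, b)" by (cases p)
    define u v where "u = g - a" and "v = h - b"
    have "(v, - u) \<in> op_adjoint S"
      using orth ab by (intro orthogonal_to_graph_op_adjoint) (auto simp: cinner_prod_def u_def v_def)
    \<comment> \<open>Pairing (v, -u) \<in> S* with (g, h) and (a, b) \<in> S** gives \<open>\<langle>-u, u\<rangle> = \<langle>v, v\<rangle>\<close>,
      so both vanish.\<close>
    moreover have "(a, b) \<in> op_adjoint (op_adjoint S)"
      using \<open>p \<in> S\<close> ab subset_op_adjoint_op_adjoint by blast
    ultimately have "cinner (- u) g = cinner v h" "cinner (- u) a = cinner v b"
      using gh unfolding op_adjoint_def by auto
    then have "cinner (- u) u = cinner v v"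
      by (simp add: u_def v_def cinner_diff_right)
    then have "- cinner u u = cinner v v"
      by (simp add: cinner_minus_left)
    then have "- sqnorm u = sqnorm v"
      unfolding sqnorm_def by (metis uminus_complex.sel)
    then have "sqnorm u = 0" "sqnorm v = 0"
      using sqnorm_nonneg[of u] sqnorm_nonneg[of v] by linarith+
    then have "u = 0" "v = 0"
      by (simp_all add: sqnorm_eq_0_iff)
    then show "(g, h) \<in> S"
      using \<open>p \<in> S\<close> ab by (simp add: u_def v_def)
  qed
qed

section \<open>Green's identity and the kernels of the boundary maps\<close>

definition green_identity ::
  "('h::complex_hilbert \<times> 'h) set \<Rightarrow> ('h \<times> 'h) set \<Rightarrow>
   ('h \<Rightarrow> 'g::complex_hilbert) \<Rightarrow> ('h \<Rightarrow> 'g) \<Rightarrow> ('h \<Rightarrow> 'g) \<Rightarrow> ('h \<Rightarrow> 'g) \<Rightarrow> bool" where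
  "green_identity T T' \<Gamma>0 \<Gamma>1 \<Gamma>0' \<Gamma>1' \<longleftrightarrow>
     (\<forall>f Tf g T'g. (f, Tf) \<in> T \<longrightarrow> (g, T'g) \<in> T' \<longrightarrow>
        cinner Tf g - cinner f T'g = cinner (\<Gamma>1 f) (\<Gamma>0' g) - cinner (\<Gamma>0 f) (\<Gamma>1' g))"

lemma green_identity_swap:
  assumes "green_identity T T' \<Gamma>0 \<Gamma>1 \<Gamma>0' \<Gamma>1'"
  shows "green_identity T' T \<Gamma>0' \<Gamma>1' \<Gamma>0 \<Gamma>1"
  unfolding green_identity_def
proof (intro allI impI)
  fix g T'g f Tf assume "(g, T'g) \<in> T'" "(f, Tf) \<in> T"
  then have "cnj (cinner Tf g - cinner f T'g) = cnj (cinner (\<Gamma>1 f) (\<Gamma>0' g) - cinner (\<Gamma>0 f) (\<Gamma>1' g))"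
    using assms unfolding green_identity_def by presburger
  then have "cinner g Tf - cinner T'g f = cinner (\<Gamma>0' g) (\<Gamma>1 f) - cinner (\<Gamma>1' g) (\<Gamma>0 f)"
    by (simp only: complex_cnj_diff cinner_conj[of Tf] cinner_conj[of f]
        cinner_conj[of "\<Gamma>1 f"] cinner_conj[of "\<Gamma>0 f"] complex_cnj_cnj)
  then show "cinner T'g f - cinner g Tf = cinner (\<Gamma>1' g) (\<Gamma>0 f) - cinner (\<Gamma>0' g) (\<Gamma>1 f)"
    by (simp add: algebra_simps)
qed

lemma domain_subset_boundary_kernels:
  assumes T_sub: "T \<subseteq> op_adjoint S"
    and G: "green_identity T T' \<Gamma>0 \<Gamma>1 \<Gamma>0' \<Gamma>1'"
    and D: "closure (\<Gamma>0 ` Domain T) = UNIV"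
    and M: "op_adjoint (restrict_ker T \<Gamma>0) = restrict_ker T' \<Gamma>0'"
  shows "Domain S \<subseteq> {g \<in> Domain T'. \<Gamma>0' g = 0 \<and> \<Gamma>1' g = 0}"
proof (clarify)
  fix g k assume gk: "(g, k) \<in> S"
  have "restrict_ker T \<Gamma>0 \<subseteq> op_adjoint S"
    using T_sub unfolding restrict_ker_def by auto
  then have "op_adjoint (op_adjoint S) \<subseteq> restrict_ker T' \<Gamma>0'"
    using op_adjoint_antimono M by metis
  then have "(g, k) \<in> restrict_ker T' \<Gamma>0'"
    using subset_op_adjoint_op_adjoint gk by blast
  then have gk': "(g, k) \<in> T'" and "\<Gamma>0' g = 0"
    unfolding restrict_ker_def by auto
  have "cinner x (\<Gamma>1' g) = 0" if "x \<in> \<Gamma>0 ` Domain T" for x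
  proof -
    obtain f Tf where f: "(f, Tf) \<in> T" "x = \<Gamma>0 f"
      using \<open>x \<in> \<Gamma>0 ` Domain T\<close> by auto
    have "cinner k f = cinner g Tf"
      using T_sub f(1) gk unfolding op_adjoint_def by auto
    then have "cinner Tf g = cinner f k"
      by (metis cinner_conj)
    moreover have "cinner Tf g - cinner f k = cinner (\<Gamma>1 f) (\<Gamma>0' g) - cinner (\<Gamma>0 f) (\<Gamma>1' g)"
      using G f(1) gk' unfolding green_identity_def by blast
    ultimately show ?thesis
      using f(2) \<open>\<Gamma>0' g = 0\<close> by simp
  qed
  then have "\<Gamma>1' g = 0"
    using orthogonal_to_dense_eq_0[OF D] by blast
  then show "g \<in> Domain T' \<and> \<Gamma>0' g = 0 \<and> \<Gamma>1' g = 0"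
    using gk' \<open>\<Gamma>0' g = 0\<close> by auto
qed

lemma boundary_kernels_subset_domain:
  assumes "is_operator S" and "closed S"
    and T_core: "closure T = op_adjoint S"
    and G: "green_identity T T' \<Gamma>0 \<Gamma>1 \<Gamma>0' \<Gamma>1'"
  shows "{g \<in> Domain T'. \<Gamma>0' g = 0 \<and> \<Gamma>1' g = 0} \<subseteq> Domain S"
proof (clarify)
  fix g k assume "(g, k) \<in> T'" "\<Gamma>0' g = 0" "\<Gamma>1' g = 0"
  then have "cinner Tf g = cinner f k" if "(f, Tf) \<in> T" for f Tf
    using G that \<open>(g, k) \<in> T'\<close> unfolding green_identity_def by fastforce
  then have "(g, k) \<in> op_adjoint T"
    unfolding op_adjoint_def by auto
  then have "(g, k) \<in> S"
    using op_adjoint_closure[of T] T_core op_adjoint_op_adjoint_closed[OF assms(1,2)] by simp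
  then show "g \<in> Domain S"
    by auto
qed

lemma domain_eq_boundary_kernels:
  assumes "closed_operator S"
    and "T \<subseteq> op_adjoint S" and "closure T = op_adjoint S"
    and "green_identity T T' \<Gamma>0 \<Gamma>1 \<Gamma>0' \<Gamma>1'"
    and "closure (\<Gamma>0 ` Domain T) = UNIV"
    and "op_adjoint (restrict_ker T \<Gamma>0) = restrict_ker T' \<Gamma>0'"
  shows "Domain S = {g \<in> Domain T'. \<Gamma>0' g = 0 \<and> \<Gamma>1' g = 0}"
  using assms domain_subset_boundary_kernels[of T S] boundary_kernels_subset_domain[of S T]
  unfolding closed_operator_def by blast

theorem lemma2p4:
  fixes S S' T T' :: "('h::complex_hilbert \<times> 'h) set"
    and \<Gamma>0 \<Gamma>1 \<Gamma>0' \<Gamma>1' :: "'h \<Rightarrow> 'g::complex_hilbert"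
  assumes separable: "\<exists>D::'h set. countable D \<and> closure D = UNIV"
    and pair: "adjoint_pair S S'"
    and T_op: "is_operator T" and T'_op: "is_operator T'"
    and T_sub: "T \<subseteq> op_adjoint S" and T'_sub: "T' \<subseteq> op_adjoint S'"
    and T_core: "closure T = op_adjoint S" and T'_core: "closure T' = op_adjoint S'"
    and lin: "linear_on_dom T \<Gamma>0" "linear_on_dom T \<Gamma>1"
             "linear_on_dom T' \<Gamma>0'" "linear_on_dom T' \<Gamma>1'"
    and G: "\<And>f Tf g T'g. (f, Tf) \<in> T \<Longrightarrow> (g, T'g) \<in> T' \<Longrightarrow>
              cinner Tf g - cinner f T'g = cinner (\<Gamma>1 f) (\<Gamma>0' g) - cinner (\<Gamma>0 f) (\<Gamma>1' g)"
    and D: "closure (\<Gamma>0 ` Domain T) = UNIV" "closure (\<Gamma>0' ` Domain T') = UNIV"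
    and M: "op_adjoint (restrict_ker T \<Gamma>0) = restrict_ker T' \<Gamma>0'"
           "op_adjoint (restrict_ker T' \<Gamma>0') = restrict_ker T \<Gamma>0"
  shows "Domain S = {g \<in> Domain T'. \<Gamma>0' g = 0 \<and> \<Gamma>1' g = 0}
       \<and> Domain S' = {f \<in> Domain T. \<Gamma>0 f = 0 \<and> \<Gamma>1 f = 0}"
proof
  have "closed_operator S" "closed_operator S'"
    using pair unfolding adjoint_pair_def by auto
  have green: "green_identity T T' \<Gamma>0 \<Gamma>1 \<Gamma>0' \<Gamma>1'"
    using G unfolding green_identity_def by blast
  show "Domain S = {g \<in> Domain T'. \<Gamma>0' g = 0 \<and> \<Gamma>1' g = 0}"
    using domain_eq_boundary_kernels[OF \<open>closed_operator S\<close> T_sub T_core green D(1) M(1)] .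
  show "Domain S' = {f \<in> Domain T. \<Gamma>0 f = 0 \<and> \<Gamma>1 f = 0}"
    using domain_eq_boundary_kernels[OF \<open>closed_operator S'\<close> T'_sub T'_core
        green_identity_swap[OF green] D(2) M(2)] .
qed

end
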